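(* Let $G$ be a graph on $n$ vertices that is not isomorphic to any of $K_n$, $\overline{K_n}$, $K_{a,n-a}$, or $\overline{K_{a,n-a}}$ for any integer $1\le a\le\lfloor n/2\rfloor$. Then \[ \operatorname{rank}(A_G+I)\cdot\operatorname{rank}(A_{\overline G}+I)\ \ge\ 3(n-1). \]
   Context: All graphs are simple (undirected, no loops or multiple edges). $A_G$ denotes the $n\times n$ adjacency matrix of $G$, $\overline{G}$ the complement of $G$, $I=I_n$ the $n\times n$ identity matrix, and $\operatorname{rank}$ is the rank over $\mathbb{R}$. $K_n$ is the complete graph on $n$ vertices, $\overline{K_n}$ the edgeless graph on $n$ vertices, and $K_{a,b}$ the complete bipartite graph with part sizes $a$ and $b$. *)

theory Defs
  imports "HOL-Analysis.Analysis"
begin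

text \<open>A simple graph on the finite vertex type 'v is a symmetric irreflexive
  relation E. The number of vertices is n = CARD('v).\<close>

definition simple_graph :: "('v \<Rightarrow> 'v \<Rightarrow> bool) \<Rightarrow> bool" where
  "simple_graph E \<longleftrightarrow> (\<forall>i j. E i j \<longleftrightarrow> E j i) \<and> (\<forall>i. \<not> E i i)"

definition compl_graph :: "('v \<Rightarrow> 'v \<Rightarrow> bool) \<Rightarrow> 'v \<Rightarrow> 'v \<Rightarrow> bool" where
  "compl_graph E i j \<longleftrightarrow> i \<noteq> j \<and> \<not> E i j"

definition adj_matrix :: "('v::finite \<Rightarrow> 'v \<Rightarrow> bool) \<Rightarrow> real^'v^'v" where
  "adj_matrix E = (\<chi> i j. if E i j then 1 else 0)"

definition complete_nat :: "nat \<Rightarrow> nat \<Rightarrow> nat \<Rightarrow> bool" where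
  "complete_nat n i j \<longleftrightarrow> i < n \<and> j < n \<and> i \<noteq> j"

definition empty_nat :: "nat \<Rightarrow> nat \<Rightarrow> nat \<Rightarrow> bool" where
  "empty_nat n i j \<longleftrightarrow> False"

text \<open>K_{a,n-a}: parts {0..<a} and {a..<n}.\<close>
definition bipartite_nat :: "nat \<Rightarrow> nat \<Rightarrow> nat \<Rightarrow> nat \<Rightarrow> bool" where
  "bipartite_nat a n i j \<longleftrightarrow> i < n \<and> j < n \<and> ((i < a) \<longleftrightarrow> \<not> (j < a))"

definition co_bipartite_nat :: "nat \<Rightarrow> nat \<Rightarrow> nat \<Rightarrow> nat \<Rightarrow> bool" where
  "co_bipartite_nat a n i j \<longleftrightarrow> i < n \<and> j < n \<and> i \<noteq> j \<and> \<not> bipartite_nat a n i j"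

definition iso_to :: "('v::finite \<Rightarrow> 'v \<Rightarrow> bool) \<Rightarrow> (nat \<Rightarrow> nat \<Rightarrow> bool) \<Rightarrow> bool" where
  "iso_to E H \<longleftrightarrow> (\<exists>f. bij_betw f (UNIV::'v set) {0..<CARD('v)} \<and> (\<forall>i j. E i j \<longleftrightarrow> H (f i) (f j)))"

end

theory Submission
  imports Defs
begin

(* Write M = A_G + I and M' = A_{co-G} + I; their quadratic forms add up to
   |x|^2 + (sum_i x_i)^2. If G has an induced path a - b - c, then x = e_a - e_b + e_c has
   x.Mx = -1, and adjoining x to the null space of M gives a subspace of dimension
   n - rank M + 1 on which the form of M is nonpositive. If G has no induced P3 it is a disjoint
   union of cliques, the null vectors of M have coordinate sum 0, and adjoining a unit vector
   gives a subspace of the same dimension on which x.Mx <= (sum_i x_i)^2, so that the form of M'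
   is positive definite there. A subspace on which a form is nonpositive meets one on which it
   is positive definite only in 0; hence rank M + rank M' >= n + 2 as soon as G or its
   complement contains an induced P3, which fails only for complete and empty graphs. Comparing
   with coordinate subspaces of cocliques in the same way gives rank M >= 3 unless G is complete
   or a disjoint union of two cliques, and symmetrically for M'. Finally
   (rank M - 3)(rank M' - 3) >= 0 yields the bound. *)

section \<open>Null spaces and quadratic forms\<close>

definition null_space :: "real^'n^'m \<Rightarrow> (real^'n) set" where
  "null_space M = {x. M *v x = 0}"

lemma subspace_null_space: "subspace (null_space M)"
  by (auto simp: null_space_def subspace_def matrix_vector_right_distrib matrix_vector_mult_scaleR)

lemma dim_null_space_add_rank:
  fixes M :: "real^'n^'m"
  shows "dim (null_space M) + rank M = CARD('n)"
proof -
  have row_orth: "null_space M = {y. \<forall>x \<in> span (rows M). orthogonal x y}"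
  proof (intro set_eqI iffI)
    fix y assume "y \<in> null_space M"
    then show "y \<in> {y. \<forall>x \<in> span (rows M). orthogonal x y}"
      by (simp add: null_space_def) (meson orthogonal_commute orthogonal_nullspace_rowspace)
  next
    fix y assume y: "y \<in> {y. \<forall>x \<in> span (rows M). orthogonal x y}"
    have "orthogonal (row k M) y" for k
      using y by (auto simp: rows_def intro: span_base)
    then show "y \<in> null_space M"
      by (simp add: null_space_def vec_eq_iff matrix_vector_mul_component orthogonal_def
          row_def vec_lambda_eta)
  qed
  have "dim {y \<in> UNIV. \<forall>x \<in> span (rows M). orthogonal x y} + dim (span (rows M))
      = dim (UNIV :: (real^'n) set)"
    by (rule dim_subspace_orthogonal_to_vectors) auto
  then show ?thesis
    using row_orth vec_dim_card by (simp add: row_rank_def dim_vec_eq)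
qed

lemma dim_nonpos_add_dim_pos_le:
  fixes M :: "real^'n^'n"
  assumes "subspace X" "subspace Y"
    and "\<And>x. x \<in> X \<Longrightarrow> x \<bullet> (M *v x) \<le> 0"
    and "\<And>y. y \<in> Y \<Longrightarrow> y \<noteq> 0 \<Longrightarrow> y \<bullet> (M *v y) > 0"
  shows "dim X + dim Y \<le> CARD('n)"
proof -
  have "x = 0" if "x \<in> X" "x \<in> Y" for x
    using assms(3,4) that by force
  then have "X \<inter> Y = {0}"
    using assms(1,2) subspace_0 by blast
  then have "dim {x + y |x y. x \<in> X \<and> y \<in> Y} = dim X + dim Y"
    using dim_sums_Int[OF assms(1,2)] by simp
  then show ?thesis
    using dim_subset_UNIV_cart[of "{x + y |x y. x \<in> X \<and> y \<in> Y}"] by simp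
qed

lemma null_space_extension:
  fixes M :: "real^'n^'m"
  assumes "M *v v \<noteq> 0"
  obtains X where "subspace X" "dim X = CARD('n) - rank M + 1"
    and "\<And>x. x \<in> X \<Longrightarrow> \<exists>z \<in> null_space M. \<exists>k. x = z + k *\<^sub>R v"
proof
  let ?N = "null_space M"
  have span_N: "span ?N = ?N"
    by (simp add: subspace_null_space)
  have "v \<notin> ?N"
    using assms by (simp add: null_space_def)
  then have "v \<notin> span ?N"
    by (metis span_N)
  then show "dim (span (insert v ?N)) = CARD('n) - rank M + 1"
    using dim_null_space_add_rank[of M] by (simp add: dim_insert)
  fix x assume "x \<in> span (insert v ?N)"
  then obtain k where "x - k *\<^sub>R v \<in> ?N"
    using span_insert[of v ?N] span_N by auto
  then show "\<exists>z \<in> ?N. \<exists>k. x = z + k *\<^sub>R v"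
    by (metis diff_add_cancel)
qed simp

lemma quad_form_null_space_add:
  fixes M :: "real^'n^'n"
  assumes "transpose M = M" "z \<in> null_space M"
  shows "(z + k *\<^sub>R v) \<bullet> (M *v (z + k *\<^sub>R v)) = k\<^sup>2 * (v \<bullet> (M *v v))"
proof -
  have "z \<bullet> (M *v v) = (transpose M *v z) \<bullet> v"
    by (simp add: dot_lmul_matrix vector_transpose_matrix)
  then have "z \<bullet> (M *v v) = 0"
    using assms by (simp add: null_space_def)
  then show ?thesis
    using assms(2)
    by (simp add: null_space_def matrix_vector_right_distrib matrix_vector_mult_scaleR
        inner_add_left inner_add_right power2_eq_square)
qed

lemma quad_form_supported:
  fixes M :: "real^'n^'n"
  assumes "\<And>k. k \<notin> S \<Longrightarrow> x $ k = 0"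
  shows "x \<bullet> (M *v x) = (\<Sum>i\<in>S. \<Sum>j\<in>S. x$i * M$i$j * x$j)"
proof -
  have "x \<bullet> (M *v x) = (\<Sum>i\<in>UNIV. \<Sum>j\<in>UNIV. x$i * M$i$j * x$j)"
    by (simp add: inner_vec_def matrix_vector_mult_def sum_distrib_left mult.assoc)
  also have "\<dots> = (\<Sum>i\<in>S. \<Sum>j\<in>UNIV. x$i * M$i$j * x$j)"
    by (rule sum.mono_neutral_right) (auto simp: assms)
  also have "\<dots> = (\<Sum>i\<in>S. \<Sum>j\<in>S. x$i * M$i$j * x$j)"
    by (intro sum.cong refl sum.mono_neutral_right) (auto simp: assms)
  finally show ?thesis .
qed

lemma dim_supported_on: "dim {x::real^'n. \<forall>k. k \<notin> S \<longrightarrow> x $ k = 0} = card S"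
  using dim_substandard_cart[where 'a=real] by (simp only: dim_vec_eq)

section \<open>The matrices A + I of a graph and of its complement\<close>

definition closed_adj_matrix :: "('v::finite \<Rightarrow> 'v \<Rightarrow> bool) \<Rightarrow> real^'v^'v" where
  "closed_adj_matrix E = adj_matrix E + mat 1"

definition induced_P3 :: "('v \<Rightarrow> 'v \<Rightarrow> bool) \<Rightarrow> bool" where
  "induced_P3 E \<longleftrightarrow> (\<exists>a b c. E a b \<and> E b c \<and> a \<noteq> c \<and> \<not> E a c)"

definition coclique :: "('v \<Rightarrow> 'v \<Rightarrow> bool) \<Rightarrow> 'v set \<Rightarrow> bool" where
  "coclique E S \<longleftrightarrow> (\<forall>i\<in>S. \<forall>j\<in>S. \<not> E i j)"

lemma closed_adj_matrix_entry:
  "closed_adj_matrix E $ i $ j = (if E i j then 1 else 0) + (if i = j then 1 else 0)"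
  by (simp add: closed_adj_matrix_def adj_matrix_def mat_def)

lemma transpose_closed_adj_matrix:
  "simple_graph E \<Longrightarrow> transpose (closed_adj_matrix E) = closed_adj_matrix E"
  by (auto simp: simple_graph_def transpose_def vec_eq_iff closed_adj_matrix_entry)

lemma simple_graph_compl: "simple_graph E \<Longrightarrow> simple_graph (compl_graph E)"
  by (auto simp: simple_graph_def compl_graph_def)

lemma compl_graph_compl_graph: "simple_graph E \<Longrightarrow> compl_graph (compl_graph E) = E"
  by (auto simp: simple_graph_def compl_graph_def fun_eq_iff)

lemma quad_form_closed_adj_add_compl:
  assumes "simple_graph E"
  shows "y \<bullet> (closed_adj_matrix E *v y) + y \<bullet> (closed_adj_matrix (compl_graph E) *v y)
    = y \<bullet> y + (\<Sum>i\<in>UNIV. y $ i)\<^sup>2"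
proof -
  have sum: "closed_adj_matrix E + closed_adj_matrix (compl_graph E) = (\<chi> i j. 1) + mat 1"
    using assms
    by (auto simp: vec_eq_iff closed_adj_matrix_entry compl_graph_def simple_graph_def mat_def)
  have "y \<bullet> ((\<chi> i j. 1) *v y) = (\<Sum>i\<in>UNIV. y $ i)\<^sup>2"
    by (simp add: inner_vec_def matrix_vector_mult_def power2_eq_square sum_distrib_right)
  then have "y \<bullet> ((closed_adj_matrix E + closed_adj_matrix (compl_graph E)) *v y)
      = y \<bullet> y + (\<Sum>i\<in>UNIV. y $ i)\<^sup>2"
    unfolding sum by (simp add: matrix_vector_mult_add_rdistrib inner_add_right)
  then show ?thesis
    by (simp add: matrix_vector_mult_add_rdistrib inner_add_right)
qed

lemma quad_form_closed_adj_coclique: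
  assumes "coclique E S" "\<And>k. k \<notin> S \<Longrightarrow> y $ k = 0"
  shows "y \<bullet> (closed_adj_matrix E *v y) = y \<bullet> y"
proof -
  have "y \<bullet> (closed_adj_matrix E *v y) = (\<Sum>i\<in>S. \<Sum>j\<in>S. y$i * (if i = j then 1 else 0) * y$j)"
    using assms by (simp add: quad_form_supported[of S] closed_adj_matrix_entry coclique_def)
  also have "\<dots> = (\<Sum>i\<in>S. \<Sum>j\<in>S. if i = j then y$i * y$i else 0)"
    by (intro sum.cong) auto
  also have "\<dots> = (\<Sum>i\<in>S. y$i * y$i)"
    by simp
  also have "\<dots> = (\<Sum>i\<in>UNIV. y$i * y$i)"
    by (rule sum.mono_neutral_left) (auto simp: assms(2))
  finally show ?thesis
    by (simp add: inner_vec_def)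
qed

lemma closed_adj_matrix_entry_reflclp:
  "simple_graph E \<Longrightarrow> closed_adj_matrix E $ i $ j = (if E\<^sup>=\<^sup>= i j then 1 else 0)"
  by (auto simp: closed_adj_matrix_entry simple_graph_def)

lemma symp_reflclp_graph: "simple_graph E \<Longrightarrow> symp E\<^sup>=\<^sup>="
  by (auto simp: simple_graph_def symp_def)

lemma transp_reflclp_iff_no_induced_P3:
  "simple_graph E \<Longrightarrow> transp E\<^sup>=\<^sup>= \<longleftrightarrow> \<not> induced_P3 E"
  unfolding simple_graph_def induced_P3_def transp_def by blast

lemma nonpos_subspace_if_induced_P3:
  fixes E :: "'v::finite \<Rightarrow> 'v \<Rightarrow> bool"
  assumes "simple_graph E" "induced_P3 E"
  obtains X where "subspace X" "dim X = CARD('v) - rank (closed_adj_matrix E) + 1"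
    and "\<And>x. x \<in> X \<Longrightarrow> x \<bullet> (closed_adj_matrix E *v x) \<le> 0"
proof -
  let ?M = "closed_adj_matrix E"
  obtain a b c where abc: "E a b" "E b c" "a \<noteq> c" "\<not> E a c"
    using assms(2) by (auto simp: induced_P3_def)
  then have "a \<noteq> b" "b \<noteq> c" "E b a" "E c b" "\<not> E c a" "\<And>i. \<not> E i i"
    using assms(1) by (auto simp: simple_graph_def)
  define v :: "real^'v" where "v = (\<chi> k. if k = b then -1 else if k = a \<or> k = c then 1 else 0)"
  have qv: "v \<bullet> (?M *v v) = -1"
    using abc \<open>a \<noteq> b\<close> \<open>b \<noteq> c\<close> \<open>E b a\<close> \<open>E c b\<close> \<open>\<not> E c a\<close> \<open>\<And>i. \<not> E i i\<close>
    by (subst quad_form_supported[of "{a, b, c}"]) (auto simp: v_def closed_adj_matrix_entry)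
  then have Mv: "?M *v v \<noteq> 0"
    by auto
  obtain X where X: "subspace X" "dim X = CARD('v) - rank ?M + 1"
    and decomp: "\<And>x. x \<in> X \<Longrightarrow> \<exists>z \<in> null_space ?M. \<exists>k. x = z + k *\<^sub>R v"
    using null_space_extension[OF Mv] by metis
  have "x \<bullet> (?M *v x) \<le> 0" if "x \<in> X" for x
    using decomp[OF that] qv quad_form_null_space_add[OF transpose_closed_adj_matrix[OF assms(1)]]
    by auto
  with X that show ?thesis
    by blast
qed

lemma sum_eq_0_if_null_space_no_induced_P3:
  fixes E :: "'v::finite \<Rightarrow> 'v \<Rightarrow> bool"
  assumes "simple_graph E" "\<not> induced_P3 E" "z \<in> null_space (closed_adj_matrix E)"
  shows "(\<Sum>i\<in>UNIV. z $ i) = 0"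
proof -
  let ?M = "closed_adj_matrix E"
  define N where "N j = {i. E\<^sup>=\<^sup>= i j}" for j
  define c where "c j = real (card (N j))" for j
  have class_eq: "N i = N j" if "i \<in> N j" for i j
    using that symp_reflclp_graph[OF assms(1)] transp_reflclp_iff_no_induced_P3[OF assms(1)] assms(2)
    unfolding N_def symp_def transp_def by blast
  \<comment> \<open>The sets \<open>N j\<close> are the cliques of \<open>E\<close>, so the weights \<open>1 / c i\<close> turn every
    column sum of \<open>?M\<close> into 1.\<close>
  have col: "(\<Sum>i\<in>UNIV. ?M $ i $ j / c i) = 1" for j
  proof -
    have "(\<Sum>i\<in>UNIV. ?M $ i $ j / c i) = (\<Sum>i\<in>UNIV. if i \<in> N j then 1 / c i else 0)"
      by (intro sum.cong) (auto simp: closed_adj_matrix_entry_reflclp[OF assms(1)] N_def)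
    also have "\<dots> = (\<Sum>i\<in>N j. 1 / c i)"
      by (simp add: sum.If_cases)
    also have "\<dots> = (\<Sum>i\<in>N j. 1 / c j)"
      by (simp add: c_def class_eq)
    also have "\<dots> = 1"
      by (simp add: c_def) (auto simp: N_def)
    finally show ?thesis .
  qed
  have "0 = (\<Sum>i\<in>UNIV. (?M *v z) $ i / c i)"
    using assms(3) by (simp add: null_space_def)
  also have "\<dots> = (\<Sum>i\<in>UNIV. \<Sum>j\<in>UNIV. ?M $ i $ j * z $ j / c i)"
    by (simp add: matrix_vector_mult_def sum_divide_distrib)
  also have "\<dots> = (\<Sum>j\<in>UNIV. \<Sum>i\<in>UNIV. ?M $ i $ j * z $ j / c i)"
    by (rule sum.swap)
  also have "\<dots> = (\<Sum>j\<in>UNIV. z $ j * (\<Sum>i\<in>UNIV. ?M $ i $ j / c i))"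
    by (simp add: sum_distrib_left mult.commute)
  also have "\<dots> = (\<Sum>j\<in>UNIV. z $ j)"
    by (simp add: col)
  finally show ?thesis
    by simp
qed

lemma subspace_quad_form_le_square_sum:
  fixes E :: "'v::finite \<Rightarrow> 'v \<Rightarrow> bool"
  assumes "simple_graph E"
  obtains Y where "subspace Y" "dim Y = CARD('v) - rank (closed_adj_matrix E) + 1"
    and "\<And>y. y \<in> Y \<Longrightarrow> y \<bullet> (closed_adj_matrix E *v y) \<le> (\<Sum>i\<in>UNIV. y $ i)\<^sup>2"
proof (cases "induced_P3 E")
  case True
  obtain X where X: "subspace X" "dim X = CARD('v) - rank (closed_adj_matrix E) + 1"
    and nonpos: "\<And>x. x \<in> X \<Longrightarrow> x \<bullet> (closed_adj_matrix E *v x) \<le> 0"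
    using nonpos_subspace_if_induced_P3[OF assms True] by metis
  have "x \<bullet> (closed_adj_matrix E *v x) \<le> (\<Sum>i\<in>UNIV. x $ i)\<^sup>2" if "x \<in> X" for x
    using nonpos[OF that] zero_le_power2[of "\<Sum>i\<in>UNIV. x $ i"] by linarith
  with X that show ?thesis
    by blast
next
  case False
  let ?M = "closed_adj_matrix E"
  fix u :: 'v
  define v :: "real^'v" where "v = axis u 1"
  have qv: "v \<bullet> (?M *v v) = 1"
    using assms by (simp add: v_def matrix_vector_mult_basis inner_axis' column_def
        closed_adj_matrix_entry simple_graph_def)
  have sum_v: "(\<Sum>i\<in>UNIV. v $ i) = 1"
    by (simp add: v_def axis_def)
  have Mv: "?M *v v \<noteq> 0"
    using qv by auto
  obtain Y where Y: "subspace Y" "dim Y = CARD('v) - rank ?M + 1"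
    and decomp: "\<And>y. y \<in> Y \<Longrightarrow> \<exists>z \<in> null_space ?M. \<exists>k. y = z + k *\<^sub>R v"
    using null_space_extension[OF Mv] by metis
  have "y \<bullet> (?M *v y) \<le> (\<Sum>i\<in>UNIV. y $ i)\<^sup>2" if "y \<in> Y" for y
  proof -
    from decomp[OF that] obtain z k where z: "z \<in> null_space ?M" and y: "y = z + k *\<^sub>R v"
      by blast
    have "(\<Sum>i\<in>UNIV. y $ i) = k"
      using sum_eq_0_if_null_space_no_induced_P3[OF assms False z] sum_v
      by (simp add: y sum.distrib sum_distrib_left[symmetric])
    moreover have "y \<bullet> (?M *v y) = k\<^sup>2"
      using quad_form_null_space_add[OF transpose_closed_adj_matrix[OF assms] z] qv by (simp add: y)
    ultimately show ?thesis
      by simp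
  qed
  with Y that show ?thesis
    by blast
qed

lemma card_add_2_le_rank_add_rank_compl_if_induced_P3:
  fixes E :: "'v::finite \<Rightarrow> 'v \<Rightarrow> bool"
  assumes "simple_graph E" "induced_P3 (compl_graph E)"
  shows "CARD('v) + 2 \<le> rank (closed_adj_matrix E) + rank (closed_adj_matrix (compl_graph E))"
proof -
  let ?M = "closed_adj_matrix E" and ?M' = "closed_adj_matrix (compl_graph E)"
  obtain X where X: "subspace X" "dim X = CARD('v) - rank ?M' + 1"
    and nonpos: "\<And>x. x \<in> X \<Longrightarrow> x \<bullet> (?M' *v x) \<le> 0"
    using nonpos_subspace_if_induced_P3[OF simple_graph_compl[OF assms(1)] assms(2)] by metis
  obtain Y where Y: "subspace Y" "dim Y = CARD('v) - rank ?M + 1"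
    and le: "\<And>y. y \<in> Y \<Longrightarrow> y \<bullet> (?M *v y) \<le> (\<Sum>i\<in>UNIV. y $ i)\<^sup>2"
    using subspace_quad_form_le_square_sum[OF assms(1)] by metis
  have "y \<bullet> (?M' *v y) > 0" if "y \<in> Y" "y \<noteq> 0" for y
    using le[OF that(1)] quad_form_closed_adj_add_compl[OF assms(1), of y] inner_gt_zero_iff[of y] that(2)
    by linarith
  then have "dim X + dim Y \<le> CARD('v)"
    using dim_nonpos_add_dim_pos_le[OF X(1) Y(1) nonpos] by blast
  moreover have "rank ?M \<le> CARD('v)" "rank ?M' \<le> CARD('v)"
    using rank_bound[of ?M] rank_bound[of ?M'] by simp_all
  ultimately show ?thesis
    using X(2) Y(2) by linarith
qed

lemma card_coclique_le_rank:
  fixes E :: "'v::finite \<Rightarrow> 'v \<Rightarrow> bool"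
  assumes "coclique E S"
  shows "card S \<le> rank (closed_adj_matrix E)"
proof -
  let ?M = "closed_adj_matrix E" and ?Y = "{y::real^'v. \<forall>k. k \<notin> S \<longrightarrow> y $ k = 0}"
  have "y \<bullet> (?M *v y) > 0" if "y \<in> ?Y" "y \<noteq> 0" for y
    using quad_form_closed_adj_coclique[OF assms] that by simp
  then have "dim (null_space ?M) + dim ?Y \<le> CARD('v)"
    by (intro dim_nonpos_add_dim_pos_le subspace_null_space) (auto simp: null_space_def subspace_def)
  then show ?thesis
    using dim_null_space_add_rank[of ?M] dim_supported_on[of S] by linarith
qed

lemma card_coclique_less_rank:
  fixes E :: "'v::finite \<Rightarrow> 'v \<Rightarrow> bool"
  assumes "simple_graph E" "induced_P3 E" "coclique E S"
  shows "card S < rank (closed_adj_matrix E)"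
proof -
  let ?M = "closed_adj_matrix E" and ?Y = "{y::real^'v. \<forall>k. k \<notin> S \<longrightarrow> y $ k = 0}"
  obtain X where X: "subspace X" "dim X = CARD('v) - rank ?M + 1"
    and nonpos: "\<And>x. x \<in> X \<Longrightarrow> x \<bullet> (?M *v x) \<le> 0"
    using nonpos_subspace_if_induced_P3[OF assms(1,2)] by metis
  have "y \<bullet> (?M *v y) > 0" if "y \<in> ?Y" "y \<noteq> 0" for y
    using quad_form_closed_adj_coclique[OF assms(3)] that by simp
  then have "dim X + dim ?Y \<le> CARD('v)"
    by (intro dim_nonpos_add_dim_pos_le[OF X(1) _ nonpos]) (auto simp: subspace_def)
  then show ?thesis
    using X(2) dim_supported_on[of S] rank_bound[of ?M] by linarith
qed

section \<open>Graphs without induced paths on three vertices\<close>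

lemma total_if_union_of_two_equivalences:
  assumes "symp R" "transp R" "symp Q" "transp Q" and cover: "\<And>i j. R i j \<or> Q i j"
  shows "(\<forall>i j. R i j) \<or> (\<forall>i j. Q i j)"
proof (rule disjCI)
  assume "\<not> (\<forall>i j. Q i j)"
  then obtain u w where "\<not> Q u w"
    by blast
  have R_u: "R v u" for v
  proof (rule ccontr)
    assume "\<not> R v u"
    then have "Q u v"
      using cover sympD[OF assms(3)] by blast
    then have "\<not> Q v w"
      using \<open>\<not> Q u w\<close> transpD[OF assms(4)] by blast
    then have "R w u"
      using cover[of v w] cover[of u w] \<open>\<not> Q u w\<close> sympD[OF assms(1)] by blast
    with \<open>\<not> Q v w\<close> have "R v u"
      using cover[of v w] transpD[OF assms(2)] by blast
    with \<open>\<not> R v u\<close> show False ..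
  qed
  show "\<forall>i j. R i j"
    using R_u sympD[OF assms(1)] transpD[OF assms(2)] by blast
qed

lemma complete_or_empty_if_no_induced_P3:
  assumes "simple_graph E" "\<not> induced_P3 E" "\<not> induced_P3 (compl_graph E)"
  shows "(\<forall>i j. i \<noteq> j \<longrightarrow> E i j) \<or> (\<forall>i j. \<not> E i j)"
proof -
  have compl: "simple_graph (compl_graph E)"
    using assms(1) by (rule simple_graph_compl)
  have "transp E\<^sup>=\<^sup>=" "transp (compl_graph E)\<^sup>=\<^sup>="
    using assms transp_reflclp_iff_no_induced_P3[OF assms(1)]
      transp_reflclp_iff_no_induced_P3[OF compl] by simp_all
  moreover have "E\<^sup>=\<^sup>= i j \<or> (compl_graph E)\<^sup>=\<^sup>= i j" for i j
    by (auto simp: compl_graph_def)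
  ultimately have "(\<forall>i j. E\<^sup>=\<^sup>= i j) \<or> (\<forall>i j. (compl_graph E)\<^sup>=\<^sup>= i j)"
    using symp_reflclp_graph[OF assms(1)] symp_reflclp_graph[OF compl]
    by (intro total_if_union_of_two_equivalences)
  then show ?thesis
    using assms(1) unfolding simple_graph_def compl_graph_def by blast
qed

lemma two_cliques_if_no_induced_P3:
  fixes E :: "'v \<Rightarrow> 'v \<Rightarrow> bool"
  assumes "simple_graph E" "\<not> induced_P3 E"
    and small: "\<And>S. coclique E S \<Longrightarrow> card S < 3"
    and "\<not> (\<forall>i j. i \<noteq> j \<longrightarrow> E i j)"
  obtains x S y where "x \<in> S" "y \<notin> S" "\<forall>i j. E i j \<longleftrightarrow> i \<noteq> j \<and> (i \<in> S \<longleftrightarrow> j \<in> S)"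
proof -
  have sym: "symp E\<^sup>=\<^sup>=" and trans: "transp E\<^sup>=\<^sup>="
    using assms(1,2) by (simp_all add: symp_reflclp_graph transp_reflclp_iff_no_induced_P3)
  obtain x y where xy: "\<not> E\<^sup>=\<^sup>= x y"
    using assms(4) by auto
  have cover: "E\<^sup>=\<^sup>= z x \<or> E\<^sup>=\<^sup>= z y" for z
  proof (rule ccontr)
    assume "\<not> ?thesis"
    then have "coclique E {x, y, z}" "card {x, y, z} = 3"
      using xy sym assms(1) by (auto simp: coclique_def simple_graph_def symp_def)
    with small show False
      by fastforce
  qed
  have same_class: "E\<^sup>=\<^sup>= i j \<longleftrightarrow> (E\<^sup>=\<^sup>= i x \<longleftrightarrow> E\<^sup>=\<^sup>= j x)" for i j
    using cover[of i] cover[of j] xy sympD[OF sym] transpD[OF trans] by blast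
  show ?thesis
  proof (rule that[of x "{z. E\<^sup>=\<^sup>= z x}" y])
    show "y \<notin> {z. E\<^sup>=\<^sup>= z x}"
      using xy sympD[OF sym] by blast
    show "\<forall>i j. E i j \<longleftrightarrow> i \<noteq> j \<and> (i \<in> {z. E\<^sup>=\<^sup>= z x} \<longleftrightarrow> j \<in> {z. E\<^sup>=\<^sup>= z x})"
    proof (intro allI)
      fix i j
      show "E i j \<longleftrightarrow> i \<noteq> j \<and> (i \<in> {z. E\<^sup>=\<^sup>= z x} \<longleftrightarrow> j \<in> {z. E\<^sup>=\<^sup>= z x})"
        using same_class[of i j] assms(1) unfolding simple_graph_def by auto
    qed
  qed simp
qed

lemma card_add_2_le_rank_add_rank_compl:
  fixes E :: "'v::finite \<Rightarrow> 'v \<Rightarrow> bool"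
  assumes "simple_graph E" "\<not> (\<forall>i j. i \<noteq> j \<longrightarrow> E i j)" "\<exists>i j. E i j"
  shows "CARD('v) + 2 \<le> rank (closed_adj_matrix E) + rank (closed_adj_matrix (compl_graph E))"
proof (cases "induced_P3 (compl_graph E)")
  case True
  then show ?thesis
    by (rule card_add_2_le_rank_add_rank_compl_if_induced_P3[OF assms(1)])
next
  case False
  then have "induced_P3 (compl_graph (compl_graph E))"
    using complete_or_empty_if_no_induced_P3[OF assms(1)] assms(2,3)
    by (auto simp: compl_graph_compl_graph[OF assms(1)])
  from card_add_2_le_rank_add_rank_compl_if_induced_P3[OF simple_graph_compl[OF assms(1)] this]
  show ?thesis
    by (simp add: compl_graph_compl_graph[OF assms(1)])
qed

section \<open>Isomorphism with the exceptional graphs\<close>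

lemma exists_bij_initial_segment:
  fixes T :: "'v::finite set"
  obtains f where "bij_betw f UNIV {0..<CARD('v)}" "\<And>i. f i < card T \<longleftrightarrow> i \<in> T"
proof -
  let ?a = "card T" and ?n = "CARD('v)"
  obtain g where g: "bij_betw g T {0..<?a}"
    using ex_bij_betw_finite_nat[of T] by auto
  have "card (- T) = card {?a..<?n}"
    by (simp add: Compl_eq_Diff_UNIV card_Diff_subset)
  then obtain h where h: "bij_betw h (- T) {?a..<?n}"
    using finite_same_card_bij[of "- T" "{?a..<?n}"] by auto
  define f where "f i = (if i \<in> T then g i else h i)" for i
  have "bij_betw f T {0..<?a}"
    using g by (rule bij_betw_cong[THEN iffD1, rotated]) (simp add: f_def)
  moreover have "bij_betw f (- T) {?a..<?n}"
    using h by (rule bij_betw_cong[THEN iffD1, rotated]) (simp add: f_def)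
  ultimately have "bij_betw f (T \<union> - T) ({0..<?a} \<union> {?a..<?n})"
    by (rule bij_betw_combine) auto
  moreover have "{0..<?a} \<union> {?a..<?n} = {0..<?n}"
    using card_mono[of UNIV T] by (simp add: ivl_disj_un_two)
  moreover have "f i < ?a \<longleftrightarrow> i \<in> T" for i
  proof (cases "i \<in> T")
    case True
    then show ?thesis
      using bij_betwE[OF g] by (simp add: f_def)
  next
    case False
    then have "h i \<in> {?a..<?n}"
      using bij_betwE[OF h] by simp
    with False show ?thesis
      by (simp add: f_def)
  qed
  ultimately show ?thesis
    using that by simp
qed

lemma exists_bij_separating:
  fixes S :: "'v::finite set"
  assumes "x \<in> S" "y \<notin> S"
  obtains a f where "1 \<le> a" "a \<le> CARD('v) div 2" "bij_betw f UNIV {0..<CARD('v)}"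
    and "\<And>i j. (f i < a \<longleftrightarrow> f j < a) \<longleftrightarrow> (i \<in> S \<longleftrightarrow> j \<in> S)"
proof -
  define T where "T = (if 2 * card S \<le> CARD('v) then S else - S)"
  have "card (- S) = CARD('v) - card S"
    by (simp add: Compl_eq_Diff_UNIV card_Diff_subset)
  then have "card T \<le> CARD('v) div 2"
    unfolding T_def by presburger
  moreover have "1 \<le> card T"
    using assms by (auto simp: T_def Suc_le_eq card_gt_0_iff)
  moreover obtain f where "bij_betw f UNIV {0..<CARD('v)}" "\<And>i. f i < card T \<longleftrightarrow> i \<in> T"
    using exists_bij_initial_segment[of T] by blast
  moreover have "(i \<in> T \<longleftrightarrow> j \<in> T) \<longleftrightarrow> (i \<in> S \<longleftrightarrow> j \<in> S)" for i j
    by (simp add: T_def)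
  ultimately show ?thesis
    using that by metis
qed

lemma iso_to_complete_nat:
  fixes E :: "'v::finite \<Rightarrow> 'v \<Rightarrow> bool"
  assumes "simple_graph E" "\<forall>i j. i \<noteq> j \<longrightarrow> E i j"
  shows "iso_to E (complete_nat CARD('v))"
proof -
  obtain f where f: "bij_betw f (UNIV::'v set) {0..<CARD('v)}"
    using ex_bij_betw_finite_nat[of "UNIV::'v set"] by auto
  then have "E i j \<longleftrightarrow> complete_nat CARD('v) (f i) (f j)" for i j
    using assms bij_betw_imp_inj_on[OF f]
    by (auto simp: complete_nat_def simple_graph_def inj_on_eq_iff dest: bij_betwE)
  with f show ?thesis
    by (auto simp: iso_to_def)
qed

lemma iso_to_empty_nat:
  fixes E :: "'v::finite \<Rightarrow> 'v \<Rightarrow> bool"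
  assumes "\<forall>i j. \<not> E i j"
  shows "iso_to E (empty_nat CARD('v))"
  using assms ex_bij_betw_finite_nat[of "UNIV::'v set"] by (auto simp: iso_to_def empty_nat_def)

lemma iso_to_co_bipartite_nat_if_two_cliques:
  fixes E :: "'v::finite \<Rightarrow> 'v \<Rightarrow> bool"
  assumes "x \<in> S" "y \<notin> S" "\<forall>i j. E i j \<longleftrightarrow> i \<noteq> j \<and> (i \<in> S \<longleftrightarrow> j \<in> S)"
  obtains a where "1 \<le> a" "a \<le> CARD('v) div 2" "iso_to E (co_bipartite_nat a CARD('v))"
proof -
  obtain a f where a: "1 \<le> a" "a \<le> CARD('v) div 2" and f: "bij_betw f UNIV {0..<CARD('v)}"
    and sep: "\<And>i j. (f i < a \<longleftrightarrow> f j < a) \<longleftrightarrow> (i \<in> S \<longleftrightarrow> j \<in> S)"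
    using exists_bij_separating[OF assms(1,2)] by metis
  have "E i j \<longleftrightarrow> co_bipartite_nat a CARD('v) (f i) (f j)" for i j
    using assms(3) sep[of i j] bij_betwE[OF f] inj_on_eq_iff[OF bij_betw_imp_inj_on[OF f]]
    by (auto simp: co_bipartite_nat_def bipartite_nat_def)
  with a f that show ?thesis
    by (auto simp: iso_to_def)
qed

lemma iso_to_bipartite_nat_if_compl_iso_to_co_bipartite_nat:
  fixes E :: "'v::finite \<Rightarrow> 'v \<Rightarrow> bool"
  assumes "simple_graph E" "iso_to (compl_graph E) (co_bipartite_nat a CARD('v))"
  shows "iso_to E (bipartite_nat a CARD('v))"
proof -
  obtain f where f: "bij_betw f UNIV {0..<CARD('v)}"
    and iso: "\<And>i j. compl_graph E i j \<longleftrightarrow> co_bipartite_nat a CARD('v) (f i) (f j)"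
    using assms(2) by (auto simp: iso_to_def)
  have "E i j \<longleftrightarrow> bipartite_nat a CARD('v) (f i) (f j)" for i j
  proof -
    have "f i < CARD('v)" "f j < CARD('v)"
      using bij_betwE[OF f] by auto
    moreover have "f i = f j \<longleftrightarrow> i = j"
      using f by (auto simp: bij_betw_def inj_on_def)
    moreover have "E i j \<longleftrightarrow> i \<noteq> j \<and> \<not> compl_graph E i j"
      using assms(1) by (auto simp: compl_graph_def simple_graph_def)
    ultimately show ?thesis
      unfolding iso co_bipartite_nat_def bipartite_nat_def by auto
  qed
  with f show ?thesis
    by (auto simp: iso_to_def)
qed

lemma three_le_rank_closed_adj_matrix:
  fixes E :: "'v::finite \<Rightarrow> 'v \<Rightarrow> bool"
  assumes "simple_graph E" "\<not> (\<forall>i j. i \<noteq> j \<longrightarrow> E i j)"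
    and "\<And>a. 1 \<le> a \<Longrightarrow> a \<le> CARD('v) div 2 \<Longrightarrow> \<not> iso_to E (co_bipartite_nat a CARD('v))"
  shows "3 \<le> rank (closed_adj_matrix E)"
proof (rule ccontr)
  assume rank: "\<not> 3 \<le> rank (closed_adj_matrix E)"
  have no_P3: "\<not> induced_P3 E"
  proof
    assume P3: "induced_P3 E"
    then obtain a b c where "E a b" "E b c" "a \<noteq> c" "\<not> E a c"
      by (auto simp: induced_P3_def)
    then have "coclique E {a, c}"
      using assms(1) by (auto simp: coclique_def simple_graph_def)
    from card_coclique_less_rank[OF assms(1) P3 this] \<open>a \<noteq> c\<close> rank show False
      by simp
  qed
  have small: "card S < 3" if "coclique E S" for S
    using card_coclique_le_rank[OF that] rank by linarith
  obtain x S y where S: "x \<in> S" "y \<notin> S" "\<forall>i j. E i j \<longleftrightarrow> i \<noteq> j \<and> (i \<in> S \<longleftrightarrow> j \<in> S)"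
    by (rule two_cliques_if_no_induced_P3[OF assms(1) no_P3 small assms(2)])
  obtain a where "1 \<le> a" "a \<le> CARD('v) div 2" "iso_to E (co_bipartite_nat a CARD('v))"
    by (rule iso_to_co_bipartite_nat_if_two_cliques[OF S])
  with assms(3) show False
    by blast
qed

lemma mult_ge_of_add_ge:
  fixes p q n :: nat
  assumes "3 \<le> p" "3 \<le> q" "n + 2 \<le> p + q"
  shows "3 * (n - 1) \<le> p * q"
proof -
  obtain p' q' where "p = p' + 3" "q = q' + 3"
    using assms(1,2) by (metis add.commute le_Suc_ex)
  then have "3 * (p + q) \<le> p * q + 9"
    by (simp add: algebra_simps)
  with assms(3) show ?thesis
    by (simp add: diff_mult_distrib2)
qed

theorem theorem4p3:
  fixes E :: "'v::finite \<Rightarrow> 'v \<Rightarrow> bool"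
  assumes "simple_graph E"
    and "\<not> iso_to E (complete_nat CARD('v))"
    and "\<not> iso_to E (empty_nat CARD('v))"
    and "\<And>a. 1 \<le> a \<Longrightarrow> a \<le> CARD('v) div 2 \<Longrightarrow> \<not> iso_to E (bipartite_nat a CARD('v))"
    and "\<And>a. 1 \<le> a \<Longrightarrow> a \<le> CARD('v) div 2 \<Longrightarrow> \<not> iso_to E (co_bipartite_nat a CARD('v))"
  shows "rank (adj_matrix E + mat 1) * rank (adj_matrix (compl_graph E) + mat 1)
           \<ge> 3 * (CARD('v) - 1)"
proof -
  let ?r = "rank (closed_adj_matrix E)" and ?s = "rank (closed_adj_matrix (compl_graph E))"
  have not_complete: "\<not> (\<forall>i j. i \<noteq> j \<longrightarrow> E i j)"
    using assms(1,2) iso_to_complete_nat by blast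
  have not_empty: "\<exists>i j. E i j"
    using assms(3) iso_to_empty_nat by blast
  then obtain u w where "E u w"
    by blast
  then have "u \<noteq> w" "\<not> compl_graph E u w"
    using assms(1) by (auto simp: compl_graph_def simple_graph_def)
  then have compl_not_complete: "\<not> (\<forall>i j. i \<noteq> j \<longrightarrow> compl_graph E i j)"
    by blast
  have "3 \<le> ?r"
    using three_le_rank_closed_adj_matrix[OF assms(1) not_complete assms(5)] .
  moreover have "3 \<le> ?s"
  proof (rule three_le_rank_closed_adj_matrix[OF simple_graph_compl[OF assms(1)] compl_not_complete])
    fix a assume "1 \<le> a" "a \<le> CARD('v) div 2"
    then show "\<not> iso_to (compl_graph E) (co_bipartite_nat a CARD('v))"
      using assms(4) iso_to_bipartite_nat_if_compl_iso_to_co_bipartite_nat[OF assms(1)] by blast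
  qed
  moreover have "CARD('v) + 2 \<le> ?r + ?s"
    using card_add_2_le_rank_add_rank_compl[OF assms(1) not_complete not_empty] .
  ultimately have "3 * (CARD('v) - 1) \<le> ?r * ?s"
    by (rule mult_ge_of_add_ge)
  then show ?thesis
    by (simp add: closed_adj_matrix_def)
qed

end
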